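(* Let $\partial$ be a derivation of $\mathcal{H}_N'$ of degree $\bm 0$, i.e. $\partial(\mathbb{K}h_{\bm r})\subseteq\mathbb{K}h_{\bm r}$ for all $\bm r\in\mathbb{Z}^N$. Then there exist $c_1,\dots,c_N\in\mathbb{K}$ such that, with $h=\sum_{k=1}^N c_kD(e_k,\bm0)\in\mathfrak h$, we have $\partial=\operatorname{ad}(h)$ on $\mathcal{H}_N'$.
   Context: $\mathbb{K}$ is an algebraically closed field of characteristic zero, $N=2m\ge2$ even, $e_1,\dots,e_N$ standard basis, $(\cdot,\cdot)$ the bilinear form on $\mathbb{K}^N$ with $(e_i,e_j)=\delta_{ij}$. Let $A_N=\mathbb{K}[t_1^{\pm1},\dots,t_N^{\pm1}]$, $d_i=t_i\frac{\partial}{\partial t_i}$, $t^{\bm r}=t_1^{r_1}\cdots t_N^{r_N}$, $D(u,\bm r)=\sum_i u_it^{\bm r}d_i$ (so $D(e_k,\bm0)=d_k$). Let $\bm J=\begin{pmatrix} O_m & I_m\\ -I_m & O_m\end{pmatrix}$, $\overline{\bm r}=\bm J\bm r$, $h_{\bm r}=D(\overline{\bm r},\bm r)$, $\mathfrak h=\operatorname{span}_{\mathbb{K}}\{d_1,\dots,d_N\}$. The Hamiltonian Lie algebra $\mathcal{H}_N=\operatorname{span}_{\mathbb{K}}\{h_{\bm r}:\bm r\ne\bm0\}\oplus\mathfrak h$ has commutator bracket with $[h_{\bm r},h_{\bm s}]=(\overline{\bm r},\bm s)h_{\bm r+\bm s}$, $[D(u,\bm0),h_{\bm r}]=(u,\bm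 r)h_{\bm r}$; $\mathcal{H}_N'=\operatorname{span}_{\mathbb{K}}\{h_{\bm r}:\bm r\ne\bm0\}$ is an ideal, and $\operatorname{ad}(h)$ denotes the map $x\mapsto[h,x]$ restricted to $\mathcal{H}_N'$. *)

theory Defs
  imports Main "HOL-Computational_Algebra.Polynomial"
begin

definition alg_closed :: "'a::field itself \<Rightarrow> bool" where
  "alg_closed _ \<longleftrightarrow> (\<forall>p::'a poly. degree p > 0 \<longrightarrow> (\<exists>x. poly p x = 0))"

text \<open>Integer vectors in Z^N are modelled as nat => int functions vanishing at indices >= N.\<close>
definition Zvec :: "nat \<Rightarrow> (nat \<Rightarrow> int) set" where
  "Zvec N = {r. \<forall>i\<ge>N. r i = 0}"

definition form :: "nat \<Rightarrow> (nat \<Rightarrow> int) \<Rightarrow> (nat \<Rightarrow> int) \<Rightarrow> int" where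
  "form N u s = (\<Sum>i<N. u i * s i)"

text \<open>rbar = J r with J = [[0, I_m], [-I_m, 0]], N = 2m.\<close>
definition Jbar :: "nat \<Rightarrow> (nat \<Rightarrow> int) \<Rightarrow> (nat \<Rightarrow> int)" where
  "Jbar m r = (\<lambda>i. if i < m then r (i + m) else if i < 2 * m then - r (i - m) else 0)"

text \<open>Elements of H_N' = span{h_r : r \<noteq> 0}: finitely supported coefficient functions
  x, where x r is the coefficient of h_r.\<close>
definition HNp :: "nat \<Rightarrow> ((nat \<Rightarrow> int) \<Rightarrow> 'a::field) set" where
  "HNp m = {x. finite {r. x r \<noteq> 0} \<and> (\<forall>r. x r \<noteq> 0 \<longrightarrow> r \<in> Zvec (2 * m) \<and> r \<noteq> (\<lambda>_. 0))}"

definition hb :: "(nat \<Rightarrow> int) \<Rightarrow> (nat \<Rightarrow> int) \<Rightarrow> 'a::field" where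
  "hb r = (\<lambda>t. if t = r then 1 else 0)"

text \<open>Bracket [h_r, h_s] = (rbar, s) h_{r+s}, extended bilinearly.\<close>
definition hbracket :: "nat \<Rightarrow> ((nat \<Rightarrow> int) \<Rightarrow> 'a::field) \<Rightarrow> ((nat \<Rightarrow> int) \<Rightarrow> 'a) \<Rightarrow> ((nat \<Rightarrow> int) \<Rightarrow> 'a)" where
  "hbracket m x y = (\<lambda>t. \<Sum>r\<in>{r. x r \<noteq> 0}. \<Sum>s\<in>{s. y s \<noteq> 0}.
      if (\<lambda>i. r i + s i) = t then of_int (form (2 * m) (Jbar m r) s) * x r * y s else 0)"

text \<open>ad(h) on H_N' for h = sum_k c_k D(e_k,0): [D(u,0), h_r] = (u,r) h_r.\<close>
definition ad_h :: "nat \<Rightarrow> (nat \<Rightarrow> 'a::field) \<Rightarrow> ((nat \<Rightarrow> int) \<Rightarrow> 'a) \<Rightarrow> ((nat \<Rightarrow> int) \<Rightarrow> 'a)" where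
  "ad_h m c x = (\<lambda>t. (\<Sum>k<2 * m. c k * of_int (t k)) * x t)"

definition is_derivation :: "nat \<Rightarrow> (((nat \<Rightarrow> int) \<Rightarrow> 'a::field) \<Rightarrow> ((nat \<Rightarrow> int) \<Rightarrow> 'a)) \<Rightarrow> bool" where
  "is_derivation m D \<longleftrightarrow>
     (\<forall>x\<in>HNp m. D x \<in> HNp m) \<and>
     (\<forall>x\<in>HNp m. \<forall>y\<in>HNp m. D (\<lambda>t. x t + y t) = (\<lambda>t. D x t + D y t)) \<and>
     (\<forall>a. \<forall>x\<in>HNp m. D (\<lambda>t. a * x t) = (\<lambda>t. a * D x t)) \<and>
     (\<forall>x\<in>HNp m. \<forall>y\<in>HNp m. D (hbracket m x y) = (\<lambda>t. hbracket m (D x) y t + hbracket m x (D y) t))"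

definition degree_zero :: "nat \<Rightarrow> (((nat \<Rightarrow> int) \<Rightarrow> 'a::field) \<Rightarrow> ((nat \<Rightarrow> int) \<Rightarrow> 'a)) \<Rightarrow> bool" where
  "degree_zero m D \<longleftrightarrow>
     (\<forall>r\<in>Zvec (2 * m). r \<noteq> (\<lambda>_. 0) \<longrightarrow> (\<forall>a. \<exists>b. D (\<lambda>t. a * hb r t) = (\<lambda>t. b * hb r t)))"

end

theory Submission
  imports Defs "HOL-Library.Function_Algebras"
begin

(* A derivation of degree 0 acts diagonally, D h_r = weight r * h_r. Applying D to
   [h_r, h_s] = omega(r, s) h_(r+s), with omega(r, s) = (J r, s), and cancelling omega(r, s)
   (characteristic 0) shows weight (r + s) = weight r + weight s whenever omega(r, s) is nonzero.
   As omega is nondegenerate, for any r, s there is a t with omega(v, t) nonzero for each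
   nonzero v among r, s, r + s; then both (r + s) + t and r + (s + t) are sums of such pairs,
   so weight is additive on all of Z^N, hence weight r = sum_k r_k * weight e_k, which is
   ad(h) for c_k = weight e_k. *)

(* Folds the zero vector (\<lambda>_. 0) of Defs, and the result of eta-expanding 0 during
   unification, into the pointwise 0 of Function_Algebras. *)
lemma lambda_zero_eq_zero [simp]: "(\<lambda>_. 0) = (0 :: 'a \<Rightarrow> 'b::zero)"
  by (simp add: zero_fun_def)

definition unit_vec :: "nat \<Rightarrow> nat \<Rightarrow> int" where
  "unit_vec k = (\<lambda>i. if i = k then 1 else 0)"

lemma zero_in_Zvec [simp]: "0 \<in> Zvec N"
  by (simp add: Zvec_def)

lemma Zvec_add: "r \<in> Zvec N \<Longrightarrow> s \<in> Zvec N \<Longrightarrow> r + s \<in> Zvec N"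
  by (simp add: Zvec_def)

lemma Zvec_scale: "r \<in> Zvec N \<Longrightarrow> (\<lambda>i. n * r i) \<in> Zvec N"
  by (simp add: Zvec_def)

lemma unit_vec_in_Zvec: "k < N \<Longrightarrow> unit_vec k \<in> Zvec N"
  by (simp add: Zvec_def unit_vec_def)

lemma Zvec_Suc_upd: "r \<in> Zvec (Suc N) \<Longrightarrow> r(N := 0) \<in> Zvec N"
  by (simp add: Zvec_def)

definition symp :: "nat \<Rightarrow> (nat \<Rightarrow> int) \<Rightarrow> (nat \<Rightarrow> int) \<Rightarrow> int" where
  "symp m r s = form (2 * m) (Jbar m r) s"

lemma symp_eq: "symp m r s = (\<Sum>i<m. r (i + m) * s i - r i * s (i + m))"
proof -
  have "symp m r s = (\<Sum>i<m + m. Jbar m r i * s i)"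
    by (simp add: symp_def form_def mult_2)
  also have "\<dots> = (\<Sum>i<m. Jbar m r i * s i) + (\<Sum>i<m. Jbar m r (i + m) * s (i + m))"
    using sum.shift_bounds_nat_ivl[of "\<lambda>i. Jbar m r i * s i" 0 m m]
    by (simp add: lessThan_atLeast0 flip: sum.atLeastLessThan_concat[of 0 m "m + m"])
  also have "\<dots> = (\<Sum>i<m. r (i + m) * s i - r i * s (i + m))"
    by (simp add: Jbar_def sum_subtractf sum_negf)
  finally show ?thesis .
qed

lemma symp_add_right: "symp m r (s + u) = symp m r s + symp m r u"
  by (simp add: symp_eq sum.distrib[symmetric] algebra_simps)

lemma symp_scale_right: "symp m r (\<lambda>i. n * s i) = n * symp m r s"
  by (simp add: symp_eq sum_distrib_left algebra_simps)

lemma symp_zero_left [simp]: "symp m 0 s = 0"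
  by (simp add: symp_eq)

lemma symp_zero_right [simp]: "symp m r 0 = 0"
  by (simp add: symp_eq)

lemma symp_self [simp]: "symp m r r = 0"
  by (simp add: symp_eq algebra_simps)

lemma symp_nonzero_imp_nonzero:
  assumes "symp m r s \<noteq> 0"
  shows "r \<noteq> 0" "s \<noteq> 0" "r + s \<noteq> 0"
proof -
  show "r \<noteq> 0" "s \<noteq> 0" using assms by auto
  have "symp m r (r + s) = symp m r s" by (simp add: symp_add_right)
  then show "r + s \<noteq> 0" using assms by auto
qed

lemma symp_unit_vec: "j < 2 * m \<Longrightarrow> symp m r (unit_vec j) = Jbar m r j"
  by (simp add: symp_def form_def unit_vec_def if_distrib cong: if_cong)

lemma symp_nondegenerate:
  assumes r: "r \<in> Zvec (2 * m)" "r \<noteq> 0"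
  shows "\<exists>u\<in>Zvec (2 * m). symp m r u \<noteq> 0"
proof -
  obtain k where k: "r k \<noteq> 0"
    using r(2) by (auto simp: fun_eq_iff)
  have "k < 2 * m"
  proof (rule ccontr)
    assume "\<not> k < 2 * m"
    with r(1) k show False by (simp add: Zvec_def)
  qed
  define j where "j = (if k < m then k + m else k - m)"
  have j: "j < 2 * m"
    using \<open>k < 2 * m\<close> by (auto simp: j_def)
  have "Jbar m r j \<noteq> 0"
    using k \<open>k < 2 * m\<close> by (auto simp: Jbar_def j_def)
  then have "symp m r (unit_vec j) \<noteq> 0"
    by (simp add: symp_unit_vec[OF j])
  then show ?thesis
    using unit_vec_in_Zvec[OF j] by blast
qed

lemma symp_generic_vector:
  assumes "finite V" "V \<subseteq> Zvec (2 * m)"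
  shows "\<exists>t\<in>Zvec (2 * m). \<forall>v\<in>V. v \<noteq> 0 \<longrightarrow> symp m v t \<noteq> 0"
  using assms
proof (induction V rule: finite_induct)
  case empty
  show ?case
    using zero_in_Zvec by blast
next
  case (insert v V)
  obtain t where t: "t \<in> Zvec (2 * m)" "\<forall>w\<in>V. w \<noteq> 0 \<longrightarrow> symp m w t \<noteq> 0"
    using insert.IH insert.prems by blast
  show ?case
  proof (cases "v = 0 \<or> symp m v t \<noteq> 0")
    case True
    with t show ?thesis by auto
  next
    case False
    then obtain u where u: "u \<in> Zvec (2 * m)" "symp m v u \<noteq> 0"
      using symp_nondegenerate insert.prems by blast
    have affine_roots_finite: "finite {l. a + l * b = 0}" if "a \<noteq> 0" for a b :: int
      using poly_roots_finite[of "[:a, b:]"] that by simp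
    (* symp m w (t + l u) is affine in l and nonzero at l = 0, so each w excludes finitely many l *)
    define bad where
      "bad = insert 0 (\<Union>w\<in>{w\<in>V. w \<noteq> 0}. {l. symp m w t + l * symp m w u = 0})"
    have "finite bad"
      using insert.hyps(1) t(2) by (auto simp: bad_def intro!: affine_roots_finite)
    then obtain l where l: "l \<notin> bad"
      using ex_new_if_finite[OF infinite_UNIV_int] by blast
    have symp_shift: "symp m w (t + (\<lambda>i. l * u i)) = symp m w t + l * symp m w u" for w
      by (simp add: symp_add_right symp_scale_right)
    have "t + (\<lambda>i. l * u i) \<in> Zvec (2 * m)"
      using t(1) u(1) by (simp add: Zvec_add Zvec_scale)
    moreover have "\<forall>w\<in>insert v V. w \<noteq> 0 \<longrightarrow> symp m w (t + (\<lambda>i. l * u i)) \<noteq> 0"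
      using False u(2) l by (auto simp: symp_shift bad_def)
    ultimately show ?thesis by blast
  qed
qed

lemma additive_from_symp_nonzero:
  fixes f :: "(nat \<Rightarrow> int) \<Rightarrow> 'a::comm_ring_1"
  assumes f0: "f 0 = 0"
    and add: "\<And>r s. r \<in> Zvec (2 * m) \<Longrightarrow> s \<in> Zvec (2 * m) \<Longrightarrow> symp m r s \<noteq> 0 \<Longrightarrow>
      f (r + s) = f r + f s"
    and r: "r \<in> Zvec (2 * m)" and s: "s \<in> Zvec (2 * m)"
  shows "f (r + s) = f r + f s"
proof -
  consider "r = 0" | "s = 0" | "symp m r s \<noteq> 0" | "r \<noteq> 0" "s \<noteq> 0" "symp m r s = 0"
    by blast
  then show ?thesis
  proof cases
    case 1
    with f0 show ?thesis by simp
  next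
    case 2
    with f0 show ?thesis by simp
  next
    case 3
    with add r s show ?thesis by blast
  next
    case 4
    obtain t where t: "t \<in> Zvec (2 * m)" "\<forall>v\<in>{r, s, r + s}. v \<noteq> 0 \<longrightarrow> symp m v t \<noteq> 0"
      using symp_generic_vector[of "{r, s, r + s}" m] r s Zvec_add by auto
    have "f (r + s + t) = f (r + s) + f t"
      using t f0 add[OF Zvec_add[OF r s] t(1)] by (cases "r + s = 0") auto
    moreover have "f (s + t) = f s + f t"
      using t 4 add[OF s t(1)] by auto
    moreover have "f (r + (s + t)) = f r + f (s + t)"
      using t 4 add[OF r Zvec_add[OF s t(1)]] by (auto simp: symp_add_right)
    ultimately show ?thesis
      by (simp add: add.assoc)
  qed
qed

lemma additive_Zvec_zero:
  fixes f :: "(nat \<Rightarrow> int) \<Rightarrow> 'a::ring_1"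
  assumes "\<And>r s. r \<in> Zvec N \<Longrightarrow> s \<in> Zvec N \<Longrightarrow> f (r + s) = f r + f s"
  shows "f 0 = 0"
proof -
  have "f 0 = f 0 + f 0"
    using assms[of 0 0] by simp
  then show ?thesis
    by simp
qed

lemma additive_Zvec_int_scale:
  fixes f :: "(nat \<Rightarrow> int) \<Rightarrow> 'a::ring_1"
  assumes add: "\<And>r s. r \<in> Zvec N \<Longrightarrow> s \<in> Zvec N \<Longrightarrow> f (r + s) = f r + f s"
    and v: "v \<in> Zvec N"
  shows "f (\<lambda>i. n * v i) = of_int n * f v"
proof (induction n rule: int_induct[where k = 0])
  case base
  show ?case
    using additive_Zvec_zero[OF add] by simp
next
  case (step1 n)
  have "f (\<lambda>i. (n + 1) * v i) = f ((\<lambda>i. n * v i) + v)"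
    by (rule arg_cong[where f = f]) (simp add: fun_eq_iff algebra_simps)
  also have "\<dots> = f (\<lambda>i. n * v i) + f v"
    by (rule add[OF Zvec_scale[OF v] v])
  finally show ?case
    using step1.IH by (simp add: algebra_simps)
next
  case (step2 n)
  have "f (\<lambda>i. n * v i) = f ((\<lambda>i. (n - 1) * v i) + v)"
    by (rule arg_cong[where f = f]) (simp add: fun_eq_iff algebra_simps)
  also have "\<dots> = f (\<lambda>i. (n - 1) * v i) + f v"
    by (rule add[OF Zvec_scale[OF v] v])
  finally show ?case
    using step2.IH by (simp add: algebra_simps)
qed

lemma additive_Zvec_expand:
  fixes f :: "(nat \<Rightarrow> int) \<Rightarrow> 'a::comm_ring_1"
  assumes add: "\<And>r s. r \<in> Zvec N \<Longrightarrow> s \<in> Zvec N \<Longrightarrow> f (r + s) = f r + f s"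
    and "r \<in> Zvec N"
  shows "f r = (\<Sum>k<N. of_int (r k) * f (unit_vec k))"
proof -
  have "f r = (\<Sum>k<n. of_int (r k) * f (unit_vec k))" if "n \<le> N" "r \<in> Zvec n" for n r
    using that
  proof (induction n arbitrary: r)
    case 0
    then have "r = 0"
      by (simp add: Zvec_def fun_eq_iff)
    then show ?case
      using additive_Zvec_zero[OF add] by simp
  next
    case (Suc n)
    have upd: "r(n := 0) \<in> Zvec N" and unit: "unit_vec n \<in> Zvec N"
      using Suc.prems by (auto simp: Zvec_def unit_vec_def)
    have "f r = f (r(n := 0) + (\<lambda>i. r n * unit_vec n i))"
      by (rule arg_cong[where f = f]) (simp add: fun_eq_iff unit_vec_def)
    also have "\<dots> = f (r(n := 0)) + f (\<lambda>i. r n * unit_vec n i)"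
      by (rule add[OF upd Zvec_scale[OF unit]])
    also have "f (\<lambda>i. r n * unit_vec n i) = of_int (r n) * f (unit_vec n)"
      by (rule additive_Zvec_int_scale[OF add unit])
    also have "f (r(n := 0)) = (\<Sum>k<n. of_int ((r(n := 0)) k) * f (unit_vec k))"
      using Suc.prems by (intro Suc.IH Zvec_Suc_upd) simp_all
    also have "\<dots> = (\<Sum>k<n. of_int (r k) * f (unit_vec k))"
      by (intro sum.cong) auto
    finally show ?case
      by simp
  qed
  with assms(2) show ?thesis
    by blast
qed

lemma hb_in_HNp: "r \<in> Zvec (2 * m) \<Longrightarrow> r \<noteq> 0 \<Longrightarrow> hb r \<in> HNp m"
  by (auto simp: HNp_def hb_def)

lemma zero_in_HNp: "0 \<in> HNp m"
  by (simp add: HNp_def)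

lemma HNp_add: "x \<in> HNp m \<Longrightarrow> y \<in> HNp m \<Longrightarrow> (\<lambda>t. x t + y t) \<in> HNp m"
proof -
  assume x: "x \<in> HNp m" and y: "y \<in> HNp m"
  have "{r. x r + y r \<noteq> 0} \<subseteq> {r. x r \<noteq> 0} \<union> {r. y r \<noteq> 0}"
    by auto
  with x y show ?thesis
    unfolding HNp_def by (auto dest: finite_subset)
qed

lemma HNp_scale: "x \<in> HNp m \<Longrightarrow> (\<lambda>t. a * x t) \<in> HNp m"
  unfolding HNp_def by (auto intro: finite_subset[of _ "{r. x r \<noteq> 0}"])

lemma sum_hb_apply:
  assumes "finite S"
  shows "(\<Sum>r\<in>S. a r * hb r t) = (if t \<in> S then a t else 0)"
proof -
  have "(\<Sum>r\<in>S. a r * hb r t) = (\<Sum>r\<in>S. if r = t then a r else 0)"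
    by (rule sum.cong) (auto simp: hb_def)
  also have "\<dots> = (if t \<in> S then a t else 0)"
    using assms by (rule sum.delta)
  finally show ?thesis .
qed

lemma sum_hb_in_HNp:
  assumes "finite S" "\<forall>r\<in>S. r \<in> Zvec (2 * m) \<and> r \<noteq> 0"
  shows "(\<lambda>t. \<Sum>r\<in>S. a r * hb r t) \<in> HNp m"
  using assms by (auto simp: HNp_def sum_hb_apply split: if_splits intro: finite_subset[of _ S])

lemma HNp_eq_sum_hb:
  assumes "x \<in> HNp m"
  shows "x = (\<lambda>t. \<Sum>r\<in>{r. x r \<noteq> 0}. x r * hb r t)"
  using assms by (auto simp: HNp_def sum_hb_apply)

lemma hbracket_hb:
  "hbracket m (\<lambda>t. a * hb r t) (\<lambda>t. b * hb s t) =
    (\<lambda>t. of_int (symp m r s) * a * b * (hb (r + s) t :: 'a::field))"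
proof (cases "a = 0 \<or> b = 0")
  case True
  then show ?thesis
    by (auto simp: hbracket_def)
next
  case False
  then have supp: "{t. a * hb r t \<noteq> (0::'a)} = {r}" "{t. b * hb s t \<noteq> (0::'a)} = {s}"
    by (auto simp: hb_def)
  have "(\<lambda>i. r i + s i) = r + s"
    by (simp add: fun_eq_iff)
  then show ?thesis
    unfolding hbracket_def supp by (intro ext) (simp add: hb_def symp_def eq_commute)
qed

locale degree_zero_derivation =
  fixes m :: nat and D :: "((nat \<Rightarrow> int) \<Rightarrow> 'a::field_char_0) \<Rightarrow> ((nat \<Rightarrow> int) \<Rightarrow> 'a)"
  assumes derivation: "is_derivation m D" and degree_zero: "degree_zero m D"
begin

lemma D_add: "x \<in> HNp m \<Longrightarrow> y \<in> HNp m \<Longrightarrow> D (\<lambda>t. x t + y t) = (\<lambda>t. D x t + D y t)"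
  using derivation by (simp add: is_derivation_def)

lemma D_scale: "x \<in> HNp m \<Longrightarrow> D (\<lambda>t. a * x t) = (\<lambda>t. a * D x t)"
  using derivation by (simp add: is_derivation_def)

lemma D_leibniz: "x \<in> HNp m \<Longrightarrow> y \<in> HNp m \<Longrightarrow>
    D (hbracket m x y) = (\<lambda>t. hbracket m (D x) y t + hbracket m x (D y) t)"
  using derivation by (simp add: is_derivation_def)

lemma D_zero: "D 0 = 0"
  using D_scale[OF zero_in_HNp, of 0] by simp

(* h_0 is not in H_N', so the eigenvalue at 0 is chosen to be 0, as additivity demands. *)
definition weight :: "(nat \<Rightarrow> int) \<Rightarrow> 'a" where
  "weight r = (if r = 0 then 0 else D (hb r) r)"

lemma D_hb:
  assumes "r \<in> Zvec (2 * m)" "r \<noteq> 0"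
  shows "D (hb r) = (\<lambda>t. weight r * hb r t)"
proof -
  obtain b where "D (\<lambda>t. 1 * hb r t) = (\<lambda>t. b * hb r t)"
    using degree_zero assms unfolding degree_zero_def by fastforce
  then have b: "D (hb r) = (\<lambda>t. b * hb r t)"
    by simp
  then have "weight r = b"
    using assms(2) by (simp add: weight_def hb_def)
  with b show ?thesis
    by simp
qed

lemma D_sum_hb:
  assumes "finite S" "\<forall>r\<in>S. r \<in> Zvec (2 * m) \<and> r \<noteq> 0"
  shows "D (\<lambda>t. \<Sum>r\<in>S. a r * hb r t) = (\<lambda>t. \<Sum>r\<in>S. a r * weight r * hb r t)"
  using assms
proof (induction S rule: finite_induct)
  case empty
  show ?case
    using D_zero by simp
next
  case (insert r S)
  have r: "r \<in> Zvec (2 * m)" "r \<noteq> 0"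
    using insert.prems by auto
  have hr: "(\<lambda>t. a r * hb r t) \<in> HNp m"
    using HNp_scale[OF hb_in_HNp[OF r]] .
  have hS: "(\<lambda>t. \<Sum>r\<in>S. a r * hb r t) \<in> HNp m"
    using insert by (intro sum_hb_in_HNp) auto
  have "D (\<lambda>t. a r * hb r t) = (\<lambda>t. a r * weight r * hb r t)"
    using D_scale[OF hb_in_HNp[OF r]] D_hb[OF r] by (simp add: mult.assoc)
  then show ?case
    using insert D_add[OF hr hS] by simp
qed

lemma D_eq_weight_mult:
  assumes x: "x \<in> HNp m"
  shows "D x = (\<lambda>t. weight t * x t)"
proof -
  let ?S = "{r. x r \<noteq> 0}"
  have S: "finite ?S" "\<forall>r\<in>?S. r \<in> Zvec (2 * m) \<and> r \<noteq> 0"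
    using x by (auto simp: HNp_def)
  have "D x = (\<lambda>t. \<Sum>r\<in>?S. x r * weight r * hb r t)"
    using D_sum_hb[OF S, of x] HNp_eq_sum_hb[OF x] by simp
  also have "\<dots> = (\<lambda>t. weight t * x t)"
    using S(1) by (auto simp: sum_hb_apply)
  finally show ?thesis .
qed

lemma weight_add_symp_nonzero:
  assumes r: "r \<in> Zvec (2 * m)" and s: "s \<in> Zvec (2 * m)" and rs: "symp m r s \<noteq> 0"
  shows "weight (r + s) = weight r + weight s"
proof -
  let ?w = "of_int (symp m r s) :: 'a"
  have r0: "r \<noteq> 0" and s0: "s \<noteq> 0" and rs0: "r + s \<noteq> 0"
    using symp_nonzero_imp_nonzero[OF rs] by auto
  have rsZ: "r + s \<in> Zvec (2 * m)"
    using Zvec_add[OF r s] .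
  have "D (hbracket m (hb r) (hb s)) = D (\<lambda>t. ?w * hb (r + s) t)"
    using hbracket_hb[of m "1::'a" r 1 s] by simp
  also have "\<dots> = (\<lambda>t. ?w * weight (r + s) * hb (r + s) t)"
    using D_scale[OF hb_in_HNp[OF rsZ rs0]] D_hb[OF rsZ rs0] by (simp add: mult.assoc)
  finally have lhs: "D (hbracket m (hb r) (hb s)) = \<dots>" .
  have "D (hbracket m (hb r) (hb s)) = (\<lambda>t. ?w * (weight r + weight s) * hb (r + s) t)"
    using D_leibniz[OF hb_in_HNp[OF r r0] hb_in_HNp[OF s s0]] D_hb[OF r r0] D_hb[OF s s0]
      hbracket_hb[of m "weight r" r 1 s] hbracket_hb[of m 1 r "weight s" s]
    by (simp add: algebra_simps)
  from fun_cong[OF trans[OF lhs[symmetric] this], of "r + s"]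
  have "?w * weight (r + s) = ?w * (weight r + weight s)"
    by (simp add: hb_def)
  moreover have "?w \<noteq> 0"
    using rs by simp
  ultimately show ?thesis
    by simp
qed

lemma weight_add:
  assumes "r \<in> Zvec (2 * m)" "s \<in> Zvec (2 * m)"
  shows "weight (r + s) = weight r + weight s"
  using additive_from_symp_nonzero[of weight m, OF _ weight_add_symp_nonzero assms]
  by (simp add: weight_def)

lemma weight_expand: "r \<in> Zvec (2 * m) \<Longrightarrow>
    weight r = (\<Sum>k<2 * m. of_int (r k) * weight (unit_vec k))"
  using additive_Zvec_expand[OF weight_add] .

end

theorem lemma4p4:
  fixes m :: nat
    and D :: "((nat \<Rightarrow> int) \<Rightarrow> 'a::field_char_0) \<Rightarrow> ((nat \<Rightarrow> int) \<Rightarrow> 'a)"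
  assumes "alg_closed TYPE('a)"
    and "m \<ge> 1"
    and "is_derivation m D"
    and "degree_zero m D"
  shows "\<exists>c :: nat \<Rightarrow> 'a. \<forall>x\<in>HNp m. D x = ad_h m c x"
proof -
  interpret degree_zero_derivation m D
    using assms(3,4) by unfold_locales
  have "D x = ad_h m (\<lambda>k. weight (unit_vec k)) x" if x: "x \<in> HNp m" for x
  proof
    fix t
    have "x t \<noteq> 0 \<Longrightarrow> t \<in> Zvec (2 * m)"
      using x by (auto simp: HNp_def)
    then show "D x t = ad_h m (\<lambda>k. weight (unit_vec k)) x t"
      by (cases "x t = 0") (auto simp: D_eq_weight_mult[OF x] ad_h_def weight_expand mult.commute)
  qed
  then show ?thesis
    by blast
qed

end
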